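(* Let $S \subseteq \mathbb{R}^n$ be nonempty, closed and convex, and let $F = (F_1,\dots,F_m)^\top\colon S \to\mathbb{R}^m$ with each $F_i$ convex. For $\ell > 0$ define $u_\ell(x) := \max_{y \in S}\min_{i=1,\dots,m}\{F_i(x) - F_i(y) - \frac{\ell}{2}\|x-y\|^2\}$, $x\in S$. Let $\ell>0$ and let $r$ be any scalar with $r \ge \ell$. Then \[ u_r(x) \le u_\ell(x) \le \frac{r}{\ell} u_r(x) \quad \text{for all } x \in S. \] *)

theory Defs
  imports "HOL-Analysis.Analysis"
begin

text \<open>The components of F = (F_1,...,F_m) are
  modelled as F :: nat => 'a => real with indices 1..m. The paper's max over y in S is
  rendered as the supremum over y in S (it coincides with the max whenever the max exists).\<close>

definition merit_u :: "'a::euclidean_space set \<Rightarrow> (nat \<Rightarrow> 'a \<Rightarrow> real) \<Rightarrow> nat \<Rightarrow> real \<Rightarrow> 'a \<Rightarrow> real" where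
  "merit_u S F m l x =
     (SUP y\<in>S. Min ((\<lambda>i. F i x - F i y - l / 2 * (norm (x - y))\<^sup>2) ` {1..m}))"

end

theory Submission
  imports Defs
begin

text \<open>Write \<open>\<phi>\<^sub>l(x, y)\<close> for the minimum inside the supremum, so that \<open>u\<^sub>l(x)\<close> is the
  supremum of \<open>\<phi>\<^sub>l(x, y)\<close> over \<open>y \<in> S\<close>. Since \<open>\<phi>\<^sub>l\<close> decreases in \<open>l\<close>, \<open>u\<^sub>r \<le> u\<^sub>l\<close>.
  For the other bound put \<open>t = l / r\<close> and move \<open>y\<close> to \<open>z = (1 - t) x + t y \<in> S\<close>:
  by convexity \<open>F\<^sub>i(x) - F\<^sub>i(z) \<ge> t (F\<^sub>i(x) - F\<^sub>i(y))\<close>, while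
  \<open>r/2 \<parallel>x - z\<parallel>\<^sup>2 = t \<cdot> l/2 \<parallel>x - y\<parallel>\<^sup>2\<close>; hence \<open>t \<phi>\<^sub>l(x, y) \<le> \<phi>\<^sub>r(x, z) \<le> u\<^sub>r(x)\<close>.
  The suprema are finite because a convex function has an affine minorant, which the
  quadratic term dominates.\<close>

lemma supporting_normal_at_rel_interior_eq_0:
  fixes S :: "'a::euclidean_space set"
  assumes "convex S" and "c \<in> rel_interior S" and "c + g \<in> affine hull S"
    and "\<And>y. y \<in> S \<Longrightarrow> g \<bullet> c \<le> g \<bullet> y"
  shows "g = 0"
proof -
  obtain e where "e > 1" and "(1 - e) *\<^sub>R (c + g) + e *\<^sub>R c \<in> S"
    using convex_rel_interior_if[OF assms(1,2)] assms(3) by fastforce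
  moreover have "(1 - e) *\<^sub>R (c + g) + e *\<^sub>R c = c - (e - 1) *\<^sub>R g"
    by (simp add: algebra_simps)
  ultimately have "g \<bullet> c \<le> g \<bullet> c - (e - 1) * (g \<bullet> g)"
    using assms(4) by (metis inner_diff_right inner_scaleR_right)
  with \<open>e > 1\<close> have "g \<bullet> g \<le> 0"
    by (simp add: mult_le_0_iff)
  then have "g \<bullet> g = 0"
    using inner_ge_zero[of g] by linarith
  then show "g = 0"
    by simp
qed

text \<open>The hyperplane separating a point below the graph at a relative interior point from the
  epigraph cannot be vertical, so it is the graph of an affine function.\<close>

lemma convex_on_affine_minorant:
  fixes f :: "'a::euclidean_space \<Rightarrow> real"
  assumes "convex S" and "S \<noteq> {}" and "convex_on S f"
  obtains g b where "\<And>y. y \<in> S \<Longrightarrow> g \<bullet> y + b \<le> f y"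
proof -
  obtain c where c: "c \<in> rel_interior S"
    using rel_interior_eq_empty assms(1,2) by blast
  then have "c \<in> S"
    using rel_interior_subset by blast
  have graph: "(y, f y) \<in> epigraph S f" if "y \<in> S" for y
    using that by (simp add: mem_epigraph)
  have "(c, f c - 1) \<notin> epigraph S f"
    by (simp add: mem_epigraph)
  moreover have "convex (epigraph S f)" and "epigraph S f \<noteq> {}"
    using assms(3) graph[OF \<open>c \<in> S\<close>] by (auto simp: convex_epigraph)
  ultimately obtain a \<beta>
    where hull: "(c, f c - 1) + a \<in> affine hull (insert (c, f c - 1) (epigraph S f))"
      and "a \<noteq> 0" and below: "a \<bullet> (c, f c - 1) \<le> \<beta>"
      and above: "\<And>p. p \<in> epigraph S f \<Longrightarrow> \<beta> \<le> a \<bullet> p"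
    using separating_hyperplane_set_point_inaff by blast
  obtain g t where a: "a = (g, t)"
    by fastforce
  have "fst ` epigraph S f = S"
  proof
    show "fst ` epigraph S f \<subseteq> S"
      by (auto simp: epigraph_def)
    show "S \<subseteq> fst ` epigraph S f"
      using graph by (metis fst_conv image_eqI subsetI)
  qed
  with \<open>c \<in> S\<close> have "fst ` insert (c, f c - 1) (epigraph S f) = S"
    by (simp add: insert_absorb)
  moreover have
    "fst ((c, f c - 1) + a) \<in> fst ` (affine hull (insert (c, f c - 1) (epigraph S f)))"
    using hull by (rule imageI)
  ultimately have "c + g \<in> affine hull S"
    unfolding affine_hull_linear_image[OF bounded_linear_fst] a by simp
  have "t > 0"
  proof (rule ccontr)
    assume "\<not> t > 0"
    moreover have "t \<ge> 0"
      using above[OF graph[OF \<open>c \<in> S\<close>]] below a by (simp add: algebra_simps)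
    ultimately have "t = 0"
      by simp
    then have "g = 0"
      using supporting_normal_at_rel_interior_eq_0[OF assms(1) c \<open>c + g \<in> affine hull S\<close>]
        above graph below a by fastforce
    with \<open>a \<noteq> 0\<close> a \<open>t = 0\<close> show False
      by (simp add: zero_prod_def)
  qed
  show thesis
  proof (rule that)
    fix y assume "y \<in> S"
    with above graph a have "\<beta> \<le> g \<bullet> y + t * f y"
      by fastforce
    with \<open>t > 0\<close> show "(- (1 / t) *\<^sub>R g) \<bullet> y + \<beta> / t \<le> f y"
      by (simp add: field_simps)
  qed
qed

lemma linear_minus_quadratic_le:
  fixes K s l :: real
  assumes "l > 0"
  shows "K * s - l / 2 * s\<^sup>2 \<le> K\<^sup>2 / (2 * l)"
proof -
  have "0 \<le> (l * s - K)\<^sup>2"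
    by simp
  then have "2 * l * (K * s - l / 2 * s\<^sup>2) \<le> K\<^sup>2"
    by (simp add: power2_eq_square algebra_simps)
  with assms show ?thesis
    by (simp add: field_simps)
qed

lemma convex_on_bdd_above_diff_minus_quadratic:
  fixes f :: "'a::euclidean_space \<Rightarrow> real"
  assumes "convex S" and "S \<noteq> {}" and "convex_on S f" and "l > 0"
  shows "bdd_above ((\<lambda>y. f x - f y - l / 2 * (norm (x - y))\<^sup>2) ` S)"
proof -
  obtain g b where minorant: "\<And>y. y \<in> S \<Longrightarrow> g \<bullet> y + b \<le> f y"
    using convex_on_affine_minorant[OF assms(1-3)] by blast
  have "f x - f y - l / 2 * (norm (x - y))\<^sup>2 \<le> f x - g \<bullet> x - b + (norm g)\<^sup>2 / (2 * l)"
    if "y \<in> S" for y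
  proof -
    have "g \<bullet> (y - x) \<ge> - (norm g * norm (x - y))"
      using Cauchy_Schwarz_ineq2[of g "y - x"] by (simp add: norm_minus_commute)
    moreover have "g \<bullet> y = g \<bullet> x + g \<bullet> (y - x)"
      by (simp add: inner_diff_right)
    ultimately show ?thesis
      using minorant[OF that] linear_minus_quadratic_le[OF assms(4), of "norm g" "norm (x - y)"]
      by linarith
  qed
  then show ?thesis
    by (intro bdd_aboveI2)
qed

definition merit_phi ::
  "(nat \<Rightarrow> 'a::real_normed_vector \<Rightarrow> real) \<Rightarrow> nat \<Rightarrow> real \<Rightarrow> 'a \<Rightarrow> 'a \<Rightarrow> real"
  where "merit_phi F m l x y = Min ((\<lambda>i. F i x - F i y - l / 2 * (norm (x - y))\<^sup>2) ` {1..m})"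

lemma merit_u_eq_SUP_merit_phi: "merit_u S F m l x = (SUP y\<in>S. merit_phi F m l x y)"
  by (simp add: merit_u_def merit_phi_def)

lemma merit_phi_le:
  assumes "i \<in> {1..m}"
  shows "merit_phi F m l x y \<le> F i x - F i y - l / 2 * (norm (x - y))\<^sup>2"
  unfolding merit_phi_def using assms by (intro Min_le) auto

lemma merit_phi_ge_iff:
  assumes "m \<ge> 1"
  shows "c \<le> merit_phi F m l x y \<longleftrightarrow>
    (\<forall>i\<in>{1..m}. c \<le> F i x - F i y - l / 2 * (norm (x - y))\<^sup>2)"
  unfolding merit_phi_def using assms by simp

lemma merit_phi_antimono:
  assumes "m \<ge> 1" and "l \<le> r"
  shows "merit_phi F m r x y \<le> merit_phi F m l x y"
  unfolding merit_phi_ge_iff[OF assms(1)]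
proof
  fix i assume i: "i \<in> {1..m}"
  have "l / 2 * (norm (x - y))\<^sup>2 \<le> r / 2 * (norm (x - y))\<^sup>2"
    using assms(2) by (simp add: mult_right_mono)
  with merit_phi_le[OF i, of F r x y]
  show "merit_phi F m r x y \<le> F i x - F i y - l / 2 * (norm (x - y))\<^sup>2"
    by linarith
qed

lemma merit_phi_scaled_le:
  assumes "m \<ge> 1" and "x \<in> S" and "y \<in> S"
    and "\<And>i. i \<in> {1..m} \<Longrightarrow> convex_on S (F i)" and "0 \<le> t" and "t \<le> 1"
  shows "t * merit_phi F m (t * r) x y \<le> merit_phi F m r x ((1 - t) *\<^sub>R x + t *\<^sub>R y)"
  unfolding merit_phi_ge_iff[OF assms(1)]
proof
  fix i assume i: "i \<in> {1..m}"
  let ?z = "(1 - t) *\<^sub>R x + t *\<^sub>R y"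
  let ?q = "t * r / 2 * (norm (x - y))\<^sup>2"
  have "t * merit_phi F m (t * r) x y \<le> t * (F i x - F i y - ?q)"
    using merit_phi_le[OF i] assms(5) by (rule mult_left_mono)
  also have "\<dots> = F i x - ((1 - t) * F i x + t * F i y) - t * ?q"
    by (simp add: algebra_simps)
  also have "\<dots> \<le> F i x - F i ?z - t * ?q"
    using convex_onD[OF assms(4)[OF i] assms(5,6,2,3)] by linarith
  also have "t * ?q = r / 2 * (norm (x - ?z))\<^sup>2"
  proof -
    have "norm (x - ?z) = t * norm (x - y)"
      using assms(5) by (simp add: algebra_simps flip: scaleR_diff_right)
    then show ?thesis
      by (simp add: power2_eq_square)
  qed
  finally show
    "t * merit_phi F m (t * r) x y \<le> F i x - F i ?z - r / 2 * (norm (x - ?z))\<^sup>2" .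
qed

lemma merit_phi_bdd_above:
  fixes F :: "nat \<Rightarrow> 'a::euclidean_space \<Rightarrow> real"
  assumes "convex S" and "S \<noteq> {}" and "m \<ge> 1" and "convex_on S (F 1)" and "l > 0"
  shows "bdd_above (merit_phi F m l x ` S)"
proof -
  obtain B where B: "\<And>y. y \<in> S \<Longrightarrow> F 1 x - F 1 y - l / 2 * (norm (x - y))\<^sup>2 \<le> B"
    using convex_on_bdd_above_diff_minus_quadratic[OF assms(1,2,4,5), where x = x]
    by (auto simp: bdd_above_def)
  have "merit_phi F m l x y \<le> B" if "y \<in> S" for y
    using order_trans[OF merit_phi_le[of 1 m F l x y] B[OF that]] assms(3) by simp
  then show ?thesis
    by (rule bdd_aboveI2)
qed

theorem corollary4p3:
  fixes S :: "'a::euclidean_space set" and F :: "nat \<Rightarrow> 'a \<Rightarrow> real"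
    and m :: nat and l r :: real
  assumes "S \<noteq> {}" and "closed S" and "convex S"
    and "m \<ge> 1"
    and "\<And>i. i \<in> {1..m} \<Longrightarrow> convex_on S (F i)"
    and "l > 0" and "r \<ge> l"
  shows "\<forall>x\<in>S. merit_u S F m r x \<le> merit_u S F m l x \<and>
                 merit_u S F m l x \<le> r / l * merit_u S F m r x"
proof (intro ballI conjI)
  fix x assume "x \<in> S"
  have bdd: "bdd_above (merit_phi F m k x ` S)" if "k > 0" for k
    using merit_phi_bdd_above[OF assms(3,1,4) _ that] assms(4,5) by simp
  show "merit_u S F m r x \<le> merit_u S F m l x"
    unfolding merit_u_eq_SUP_merit_phi
    using assms(1) bdd[OF assms(6)]
    by (intro cSUP_mono) (blast intro: merit_phi_antimono[OF assms(4,7)])+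
  show "merit_u S F m l x \<le> r / l * merit_u S F m r x"
    unfolding merit_u_eq_SUP_merit_phi
  proof (rule cSUP_least[OF assms(1)])
    fix y assume "y \<in> S"
    define t where "t = l / r"
    have t: "0 < t" "t \<le> 1" "t * r = l"
      using assms(6,7) by (auto simp: t_def)
    have "t * merit_phi F m l x y \<le> merit_phi F m r x ((1 - t) *\<^sub>R x + t *\<^sub>R y)"
      using merit_phi_scaled_le[OF assms(4) \<open>x \<in> S\<close> \<open>y \<in> S\<close> assms(5), where t = t and r = r] t
      by simp
    also have "\<dots> \<le> (SUP z\<in>S. merit_phi F m r x z)"
      using bdd t \<open>x \<in> S\<close> \<open>y \<in> S\<close> assms(3,6,7)
      by (intro cSUP_upper convexD) auto
    finally show "merit_phi F m l x y \<le> r / l * (SUP z\<in>S. merit_phi F m r x z)"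
      using assms(6,7) by (simp add: t_def field_simps)
  qed
qed

end
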